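(* Let $G$ be an $r$-regular graph and let $0\leq\alpha\leq 1$. (i) Suppose $G$ contains $t$ pairwise vertex-disjoint cliques. Then $S_k(A_{\alpha}(G))\geq \alpha kr+(1-\alpha)(r-k+1)$ for $1\leq k \leq t+1$. (ii) Suppose $G$ contains $c$ pairwise vertex-disjoint induced cycles $C_{g_1}, C_{g_2}, \ldots, C_{g_c}$, each of even length, with lengths $g_1\geq g_2\geq \cdots \geq g_c$. Then $$S_k(A_{\alpha}(G))\geq (\alpha k+1-\alpha)r+2(1-\alpha)\sum_{i=1}^{k-1}\left(1-\frac{4}{g_{i}}\right)$$ for $1\leq k \leq c+1$.
   Context: All graphs are simple and undirected. $A_{\alpha}(G)=\alpha D(G)+(1-\alpha)A(G)$, where $A(G)$ is the adjacency matrix and $D(G)$ the diagonal degree matrix. For a real symmetric matrix $M$ with eigenvalues $\lambda_1(M)\geq\cdots\geq\lambda_n(M)$, $S_k(M)=\sum_{i=1}^k\lambda_i(M)$. A clique of $G$ is a maximal complete subgraph of $G$. $C_g$ denotes a cycle of length $g$. *)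

theory Defs
  imports "Jordan_Normal_Form.Char_Poly" "HOL-Computational_Algebra.Polynomial"
begin

(* A simple undirected graph on the vertex set {0..<n}: E is a symmetric,
   irreflexive adjacency relation (only its values on {0..<n} matter). *)
definition simple_graph :: "nat \<Rightarrow> (nat \<Rightarrow> nat \<Rightarrow> bool) \<Rightarrow> bool" where
  "simple_graph n E \<longleftrightarrow>
     (\<forall>i<n. \<forall>j<n. E i j \<longleftrightarrow> E j i) \<and> (\<forall>i<n. \<not> E i i)"

definition degree :: "nat \<Rightarrow> (nat \<Rightarrow> nat \<Rightarrow> bool) \<Rightarrow> nat \<Rightarrow> nat" where
  "degree n E i = card {j. j < n \<and> E i j}"

definition regular :: "nat \<Rightarrow> (nat \<Rightarrow> nat \<Rightarrow> bool) \<Rightarrow> nat \<Rightarrow> bool" where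
  "regular n E r \<longleftrightarrow> (\<forall>i<n. degree n E i = r)"

definition adj_mat :: "nat \<Rightarrow> (nat \<Rightarrow> nat \<Rightarrow> bool) \<Rightarrow> real mat" where
  "adj_mat n E = mat n n (\<lambda>(i,j). if E i j then 1 else 0)"

definition deg_mat :: "nat \<Rightarrow> (nat \<Rightarrow> nat \<Rightarrow> bool) \<Rightarrow> real mat" where
  "deg_mat n E = mat n n (\<lambda>(i,j). if i = j then real (degree n E i) else 0)"

definition A_alpha :: "real \<Rightarrow> nat \<Rightarrow> (nat \<Rightarrow> nat \<Rightarrow> bool) \<Rightarrow> real mat" where
  "A_alpha \<alpha> n E = \<alpha> \<cdot>\<^sub>m deg_mat n E + (1 - \<alpha>) \<cdot>\<^sub>m adj_mat n E"

definition eigenvalues_desc :: "real mat \<Rightarrow> real list" where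
  "eigenvalues_desc M = rev (sorted_list_of_multiset (proots (char_poly M)))"

definition S_k :: "nat \<Rightarrow> real mat \<Rightarrow> real" where
  "S_k k M = sum_list (take k (eigenvalues_desc M))"

definition complete_set :: "nat \<Rightarrow> (nat \<Rightarrow> nat \<Rightarrow> bool) \<Rightarrow> nat set \<Rightarrow> bool" where
  "complete_set n E K \<longleftrightarrow> K \<subseteq> {0..<n} \<and> (\<forall>u\<in>K. \<forall>v\<in>K. u \<noteq> v \<longrightarrow> E u v)"

definition is_clique :: "nat \<Rightarrow> (nat \<Rightarrow> nat \<Rightarrow> bool) \<Rightarrow> nat set \<Rightarrow> bool" where
  "is_clique n E K \<longleftrightarrow> K \<noteq> {} \<and> complete_set n E K \<and>
     (\<forall>K'. complete_set n E K' \<and> K \<subseteq> K' \<longrightarrow> K' = K)"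

definition induced_cycle :: "nat \<Rightarrow> (nat \<Rightarrow> nat \<Rightarrow> bool) \<Rightarrow> nat list \<Rightarrow> bool" where
  "induced_cycle n E cs \<longleftrightarrow>
     (let g = length cs in
       g \<ge> 3 \<and> distinct cs \<and> set cs \<subseteq> {0..<n} \<and>
       (\<forall>i<g. \<forall>j<g. E (cs ! i) (cs ! j) \<longleftrightarrow>
            (j = (i + 1) mod g \<or> i = (j + 1) mod g)))"

end

theory Submission
  imports Defs "Jordan_Normal_Form.Schur_Decomposition"
begin

(*
  Ky Fan's maximum principle: if M is real symmetric and x_1, ..., x_k are pairwise orthogonal
  and nonzero, the Rayleigh quotients of M at the x_i add up to at most S_k(M).  In an
  orthonormal eigenbasis u_1, ..., u_n the sum becomes sum_j lambda_j w_j, where by Bessel's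
  inequality the weights w_j = sum_i <u_j, x_i / |x_i|>^2 lie in [0, 1] and add up to k.

  For an r-regular graph the Rayleigh quotient of A_alpha at x is alpha r plus (1 - alpha)
  times the sum of x_p x_q over ordered adjacent pairs, divided by |x|^2.  The all-ones vector
  gives r; the vector e_a - e_b of an edge ab gives alpha r - (1 - alpha); the vector that is
  +1 on one half of an induced even cycle C_g and -1 on the other half gives
  alpha r + 2 (1 - alpha) (1 - 4/g).  Vectors supported on disjoint vertex sets are orthogonal,
  and the last two kinds sum to zero, so they are orthogonal to the all-ones vector.  A clique
  contains an edge unless r = 0, in which case A_alpha = 0.
*)

section \<open>Orthonormal lists of real vectors\<close>

definition orthonormal :: "nat \<Rightarrow> real vec list \<Rightarrow> bool" where
  "orthonormal n ws \<longleftrightarrow> set ws \<subseteq> carrier_vec n \<and>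
     (\<forall>i<length ws. \<forall>j<length ws. ws ! i \<bullet> ws ! j = (if i = j then 1 else 0))"

lemma orthonormal_nth_carrier: "orthonormal n ws \<Longrightarrow> i < length ws \<Longrightarrow> ws ! i \<in> carrier_vec n"
  unfolding orthonormal_def by auto

definition normalized :: "real vec \<Rightarrow> real vec" where
  "normalized v = (1 / sqrt (v \<bullet> v)) \<cdot>\<^sub>v v"

lemma normalized_carrier [simp]: "v \<in> carrier_vec n \<Longrightarrow> normalized v \<in> carrier_vec n"
  unfolding normalized_def by simp

lemma scalar_prod_normalized:
  assumes "u \<in> carrier_vec n" and "v \<in> carrier_vec n"
  shows "normalized u \<bullet> normalized v = (u \<bullet> v) / (sqrt (u \<bullet> u) * sqrt (v \<bullet> v))"
  unfolding normalized_def using assms by simp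

lemma normalized_unit:
  assumes "v \<in> carrier_vec n" and "v \<noteq> 0\<^sub>v n"
  shows "normalized v \<bullet> normalized v = 1"
  using scalar_prod_normalized[OF assms(1,1)] conjugate_square_greater_0_vec[OF assms(1)] assms(2)
  by simp

lemma orthonormal_map_normalized:
  assumes xs: "set xs \<subseteq> carrier_vec n" and nz: "0\<^sub>v n \<notin> set xs"
    and orth: "\<And>i j. i < length xs \<Longrightarrow> j < length xs \<Longrightarrow> i \<noteq> j \<Longrightarrow> xs ! i \<bullet> xs ! j = 0"
  shows "orthonormal n (map normalized xs)"
proof -
  have "normalized (xs ! i) \<bullet> normalized (xs ! j) = (if i = j then 1 else 0)"
    if "i < length xs" "j < length xs" for i j
  proof -
    have "xs ! i \<in> carrier_vec n" "xs ! j \<in> carrier_vec n" "xs ! i \<noteq> 0\<^sub>v n"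
      using xs nz nth_mem[OF that(1)] nth_mem[OF that(2)] by auto
    then show ?thesis
      using normalized_unit scalar_prod_normalized orth[OF that] by (cases "i = j") auto
  qed
  then show ?thesis unfolding orthonormal_def using xs by auto
qed

lemma orthonormal_extend_unit_vec:
  assumes v: "v \<in> carrier_vec n" and v1: "v \<bullet> v = 1"
  shows "\<exists>ws. length ws = n \<and> orthonormal n ws \<and> hd ws = v"
proof -
  interpret cof_vec_space n "TYPE(real)" .
  have v0: "v \<noteq> 0\<^sub>v n" using v v1 by auto
  have n: "n > 0" using v v1 by (cases n) (auto simp: scalar_prod_def)
  define b where "b = basis_completion v"
  have b: "set b \<subseteq> carrier_vec n" "distinct b" "\<not> lin_dep (set b)" "hd b = v" "length b = n"
    using basis_completion[OF v v0] unfolding b_def by auto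
  then obtain vs where bv: "b = v # vs" using n by (cases b) auto
  define gs where "gs = gram_schmidt n b"
  have gs: "set gs \<subseteq> carrier_vec n" "corthogonal gs" "length gs = n" "hd gs = v"
    using gram_schmidt_result[OF b(1-3) gs_def] b(5) v unfolding gs_def bv by auto
  have "0\<^sub>v n \<notin> set gs"
  proof
    assume "0\<^sub>v n \<in> set gs"
    then obtain i where "i < length gs" "gs ! i = 0\<^sub>v n" by (auto simp: in_set_conv_nth)
    then show False using corthogonalD[OF gs(2), of i i] by simp
  qed
  moreover have "gs ! i \<bullet> gs ! j = 0" if "i < length gs" "j < length gs" "i \<noteq> j" for i j
    using corthogonalD[OF gs(2) that(1,2)] that(3) by simp
  ultimately have "orthonormal n (map normalized gs)"
    using orthonormal_map_normalized[OF gs(1)] by blast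
  moreover have "hd (map normalized gs) = v"
  proof -
    have "gs \<noteq> []" using gs(3) n by auto
    then show ?thesis using gs(4) v1 by (simp add: hd_map normalized_def)
  qed
  ultimately show ?thesis using gs(3) by (metis length_map)
qed

lemma orthonormal_mat_of_cols:
  assumes "orthonormal n ws"
  shows "(mat_of_cols n ws)\<^sup>T * mat_of_cols n ws = 1\<^sub>m (length ws)"
proof -
  have "ws ! j \<in> carrier_vec n" if "j < length ws" for j
    using orthonormal_nth_carrier[OF assms that] .
  then show ?thesis using assms unfolding orthonormal_def by (intro eq_matI) auto
qed

lemma orthonormal_mat_of_cols_square:
  assumes "orthonormal n ws" and "length ws = n"
  shows "mat_of_cols n ws * (mat_of_cols n ws)\<^sup>T = 1\<^sub>m n"
  using mat_mult_left_right_inverse[OF _ _ orthonormal_mat_of_cols[OF assms(1)]] assms(2) by auto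

lemma isometry_scalar_prod:
  fixes U :: "real mat"
  assumes U: "U \<in> carrier_mat n k" and UU: "U\<^sup>T * U = 1\<^sub>m k"
    and a: "a \<in> carrier_vec k" and b: "b \<in> carrier_vec k"
  shows "(U *\<^sub>v a) \<bullet> (U *\<^sub>v b) = a \<bullet> b"
proof -
  have "(U *\<^sub>v a) \<bullet> (U *\<^sub>v b) = (U\<^sup>T *\<^sub>v (U *\<^sub>v a)) \<bullet> b"
    using transpose_vec_mult_scalar[OF U b, of "U *\<^sub>v a"] U a by simp
  also have "U\<^sup>T *\<^sub>v (U *\<^sub>v a) = a"
    using assoc_mult_mat_vec[of "U\<^sup>T" k n U k a] U a UU by simp
  finally show ?thesis .
qed

lemma orthonormal_map_isometry:
  assumes U: "U \<in> carrier_mat n k" and UU: "U\<^sup>T * U = 1\<^sub>m k" and xs: "orthonormal k xs"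
  shows "orthonormal n (map ((*\<^sub>v) U) xs)"
proof -
  have "xs ! i \<in> carrier_vec k" if "i < length xs" for i
    using orthonormal_nth_carrier[OF xs that] .
  then show ?thesis
    using xs isometry_scalar_prod[OF U UU] U unfolding orthonormal_def by auto
qed

lemma orthonormal_unit_vec_vCons:
  assumes "orthonormal m us"
  shows "orthonormal (Suc m) (unit_vec (Suc m) 0 # map (vCons 0) us)"
proof -
  have [simp]: "unit_vec (Suc m) 0 = vCons 1 (0\<^sub>v m)"
    by (intro eq_vecI) (auto simp: vec_index_vCons)
  have "vCons a x \<bullet> vCons b y = a * b + x \<bullet> y" if "x \<in> carrier_vec m" "y \<in> carrier_vec m"
    for a b :: real and x y
    using that by (simp add: scalar_prod_def atLeast0LessThan sum.lessThan_Suc_shift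
        del: sum.lessThan_Suc sum.op_ivl_Suc)
  moreover have "us ! i \<in> carrier_vec m" if "i < length us" for i
    using orthonormal_nth_carrier[OF assms that] .
  ultimately show ?thesis
    using assms unfolding orthonormal_def by (auto simp: nth_Cons split: nat.splits)
qed

lemma orthonormal_coordinates:
  assumes us: "orthonormal n us" "length us = n" and x: "x \<in> carrier_vec n"
  shows "(mat_of_cols n us)\<^sup>T *\<^sub>v x = vec n (\<lambda>j. us ! j \<bullet> x)"
  using us x orthonormal_nth_carrier[OF us(1)] by (intro eq_vecI) auto

lemma orthonormal_basis_scalar_prod:
  assumes us: "orthonormal n us" "length us = n" and x: "x \<in> carrier_vec n" and y: "y \<in> carrier_vec n"
  shows "x \<bullet> y = (\<Sum>j<n. (us ! j \<bullet> x) * (us ! j \<bullet> y))"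
proof -
  let ?U = "mat_of_cols n us"
  have U: "?U\<^sup>T \<in> carrier_mat n n" using us(2) by auto
  have "(?U\<^sup>T)\<^sup>T * ?U\<^sup>T = 1\<^sub>m n" using orthonormal_mat_of_cols_square[OF us] by simp
  then have "x \<bullet> y = (?U\<^sup>T *\<^sub>v x) \<bullet> (?U\<^sup>T *\<^sub>v y)"
    using isometry_scalar_prod[OF U _ x y] by simp
  then show ?thesis
    using x y by (simp add: orthonormal_coordinates[OF us] scalar_prod_def lessThan_atLeast0)
qed

lemma bessel_inequality:
  assumes ys: "orthonormal n ys" and u: "u \<in> carrier_vec n"
  shows "(\<Sum>i<length ys. (ys ! i \<bullet> u)\<^sup>2) \<le> u \<bullet> u"
proof -
  define Y where "Y = mat_of_cols n ys"
  define c where "c = Y\<^sup>T *\<^sub>v u"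
  define z where "z = Y *\<^sub>v c"
  \<comment> \<open>\<open>z\<close> is the orthogonal projection of \<open>u\<close> onto the span of \<open>ys\<close>.\<close>
  have Y: "Y \<in> carrier_mat n (length ys)" unfolding Y_def by simp
  have c: "c \<in> carrier_vec (length ys)" and z: "z \<in> carrier_vec n"
    unfolding c_def z_def using Y u by auto
  have zz: "z \<bullet> z = c \<bullet> c"
    unfolding z_def using isometry_scalar_prod[OF Y _ c c] orthonormal_mat_of_cols[OF ys] Y_def by simp
  have "u \<bullet> z = c \<bullet> c"
    unfolding z_def using transpose_vec_mult_scalar[OF Y c u] unfolding c_def by simp
  then have zu: "z \<bullet> u = c \<bullet> c" using comm_scalar_prod[OF z u] by simp
  have "0 \<le> (z - u) \<bullet> (z - u)"
    using conjugate_square_ge_0_vec[of "z - u"] by simp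
  also have "\<dots> = z \<bullet> z - z \<bullet> u - (u \<bullet> z - u \<bullet> u)"
    using minus_scalar_prod_distrib[OF z u, of "z - u"] scalar_prod_minus_distrib[OF z z u]
      scalar_prod_minus_distrib[OF u z u] z u by simp
  also have "\<dots> = u \<bullet> u - c \<bullet> c"
    using zz zu comm_scalar_prod[OF z u] by simp
  finally have "c \<bullet> c \<le> u \<bullet> u" by simp
  moreover have "c \<bullet> c = (\<Sum>i<length ys. (ys ! i \<bullet> u)\<^sup>2)"
    using c orthonormal_nth_carrier[OF ys] u
    unfolding c_def Y_def by (simp add: scalar_prod_def lessThan_atLeast0 power2_eq_square)
  ultimately show ?thesis by simp
qed

section \<open>Spectral theorem for real symmetric matrices\<close>

lemma real_symmetric_complex_eigenvalue_real:
  fixes M :: "real mat"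
  assumes M: "M \<in> carrier_mat n n" and sym: "M\<^sup>T = M"
    and ev: "eigenvector (map_mat complex_of_real M) v a"
  shows "cnj a = a"
proof -
  let ?Mc = "map_mat complex_of_real M"
  have Mc: "?Mc \<in> carrier_mat n n" and sym_c: "?Mc\<^sup>T = ?Mc"
    using M sym by (auto simp: map_mat_transpose)
  have v: "v \<in> carrier_vec n" "v \<noteq> 0\<^sub>v n" and Mv: "?Mc *\<^sub>v v = a \<cdot>\<^sub>v v"
    using ev Mc unfolding eigenvector_def by auto
  have conj_Mv: "conjugate (?Mc *\<^sub>v v) = ?Mc *\<^sub>v conjugate v"
    using M v by (intro eq_vecI) (auto simp: scalar_prod_def)
  have "a * (v \<bullet>c v) = (?Mc *\<^sub>v v) \<bullet> conjugate v"
    using v by (simp add: Mv)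
  also have "\<dots> = v \<bullet> (?Mc *\<^sub>v conjugate v)"
    using transpose_vec_mult_scalar[OF Mc _ v(1), of "conjugate v"] v sym_c by simp
  also have "\<dots> = cnj a * (v \<bullet>c v)"
    using v by (simp flip: conj_Mv add: Mv conjugate_smult_vec)
  finally show "cnj a = a"
    using v conjugate_square_eq_0_vec[of v n] by simp
qed

lemma real_symmetric_has_eigenvalue:
  fixes M :: "real mat"
  assumes M: "M \<in> carrier_mat n n" and sym: "M\<^sup>T = M" and n: "n > 0"
  shows "\<exists>e. eigenvalue M e"
proof -
  let ?Mc = "map_mat complex_of_real M"
  have Mc: "?Mc \<in> carrier_mat n n" using M by simp
  obtain as where cp: "char_poly ?Mc = (\<Prod>a\<leftarrow>as. [:- a, 1:])" and "length as = n"
    using char_poly_factorized[OF Mc] by blast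
  then obtain a where "a \<in> set as" using n by (cases as) auto
  then have "eigenvalue ?Mc a"
    unfolding eigenvalue_root_char_poly[OF Mc] cp by (auto simp: poly_prod_list_zero_iff)
  then obtain v where "eigenvector ?Mc v a" unfolding eigenvalue_def by blast
  then have "a = complex_of_real (Re a)"
    using real_symmetric_complex_eigenvalue_real[OF M sym] by (metis Reals_cnj_iff of_real_Re)
  moreover have "poly (char_poly ?Mc) a = 0"
    using \<open>eigenvalue ?Mc a\<close> eigenvalue_root_char_poly[OF Mc] by simp
  ultimately have "poly (char_poly M) (Re a) = 0"
    by (metis of_real_hom.char_poly_hom[OF M] of_real_hom.poly_map_poly of_real_eq_0_iff)
  then show ?thesis using eigenvalue_root_char_poly[OF M] by blast
qed

definition orthonormal_eigenbasis :: "nat \<Rightarrow> real mat \<Rightarrow> real vec list \<Rightarrow> real list \<Rightarrow> bool" where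
  "orthonormal_eigenbasis n M us ds \<longleftrightarrow> length us = n \<and> length ds = n \<and> orthonormal n us \<and>
     (\<forall>i<n. M *\<^sub>v us ! i = ds ! i \<cdot>\<^sub>v us ! i)"

lemma symmetric_scalar_prod_mult:
  fixes M :: "real mat"
  assumes M: "M \<in> carrier_mat n n" and sym: "M\<^sup>T = M"
    and u: "u \<in> carrier_vec n" and w: "w \<in> carrier_vec n"
  shows "u \<bullet> (M *\<^sub>v w) = w \<bullet> (M *\<^sub>v u)"
  using transpose_vec_mult_scalar[OF M w u] comm_scalar_prod[OF _ w, of "M *\<^sub>v u"] M u sym
  by simp

lemma unit_eigenvector_exists:
  fixes M :: "real mat"
  assumes M: "M \<in> carrier_mat n n" and "eigenvalue M e"
  shows "\<exists>v. v \<in> carrier_vec n \<and> v \<bullet> v = 1 \<and> M *\<^sub>v v = e \<cdot>\<^sub>v v"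
proof -
  obtain w where w: "w \<in> carrier_vec n" "w \<noteq> 0\<^sub>v n" "M *\<^sub>v w = e \<cdot>\<^sub>v w"
    using assms M unfolding eigenvalue_def eigenvector_def by auto
  have "normalized w \<in> carrier_vec n" "normalized w \<bullet> normalized w = 1"
    "M *\<^sub>v normalized w = e \<cdot>\<^sub>v normalized w"
    using w normalized_unit M unfolding normalized_def by (auto simp: mult_mat_vec smult_smult_assoc mult.commute)
  then show ?thesis by blast
qed

lemma mat_of_cols_congruence_index:
  assumes M: "M \<in> carrier_mat n n" and ws: "set ws \<subseteq> carrier_vec n"
    and i: "i < length ws" and j: "j < length ws"
  shows "((mat_of_cols n ws)\<^sup>T * (M * mat_of_cols n ws)) $$ (i, j) = ws ! i \<bullet> (M *\<^sub>v ws ! j)"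
proof -
  have "ws ! i \<in> carrier_vec n" "ws ! j \<in> carrier_vec n" using ws i j by auto
  then show ?thesis
    using col_mult2[OF M mat_of_cols_carrier(1) j] M i j by simp
qed

lemma orthonormal_basis_congruence:
  assumes M: "M \<in> carrier_mat n n" and ws: "orthonormal n ws" "length ws = n"
  defines "W \<equiv> mat_of_cols n ws"
  shows "W \<in> carrier_mat n n" and "W\<^sup>T * W = 1\<^sub>m n" and "M * W = W * (W\<^sup>T * (M * W))"
proof -
  show W: "W \<in> carrier_mat n n" unfolding W_def using ws(2) by auto
  show "W\<^sup>T * W = 1\<^sub>m n" unfolding W_def using orthonormal_mat_of_cols[OF ws(1)] ws(2) by simp
  have "W * (W\<^sup>T * (M * W)) = (W * W\<^sup>T) * (M * W)"
    using W M by (simp add: assoc_mult_mat[of _ n n _ n _ n])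
  then show "M * W = W * (W\<^sup>T * (M * W))"
    using orthonormal_mat_of_cols_square[OF ws] W M unfolding W_def by simp
qed

lemma eigenvector_congruence_block:
  fixes M :: "real mat"
  assumes M: "M \<in> carrier_mat (Suc m) (Suc m)" and sym: "M\<^sup>T = M"
    and ws: "orthonormal (Suc m) ws" "length ws = Suc m" and ev: "M *\<^sub>v ws ! 0 = e \<cdot>\<^sub>v ws ! 0"
  defines "B \<equiv> (mat_of_cols (Suc m) ws)\<^sup>T * (M * mat_of_cols (Suc m) ws)"
  shows "\<And>i j. i < Suc m \<Longrightarrow> j < Suc m \<Longrightarrow> B $$ (i, j) = B $$ (j, i)"
    and "\<And>i. i < m \<Longrightarrow> B $$ (Suc i, 0) = 0" and "\<And>j. j < m \<Longrightarrow> B $$ (0, Suc j) = 0"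
proof -
  have ws_carrier: "set ws \<subseteq> carrier_vec (Suc m)" using ws(1) unfolding orthonormal_def by simp
  then have B_entry: "B $$ (i, j) = ws ! i \<bullet> (M *\<^sub>v ws ! j)" if "i < Suc m" "j < Suc m" for i j
    unfolding B_def using ws(2) that by (intro mat_of_cols_congruence_index[OF M]) auto
  show B_sym: "B $$ (i, j) = B $$ (j, i)" if "i < Suc m" "j < Suc m" for i j
  proof -
    have "ws ! i \<in> carrier_vec (Suc m)" "ws ! j \<in> carrier_vec (Suc m)"
      using ws_carrier ws(2) that by auto
    then show ?thesis using B_entry that symmetric_scalar_prod_mult[OF M sym] by simp
  qed
  show B_col0: "B $$ (Suc i, 0) = 0" if "i < m" for i
  proof -
    have "ws ! Suc i \<in> carrier_vec (Suc m)" "ws ! 0 \<in> carrier_vec (Suc m)"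
      using ws_carrier ws(2) that by auto
    then show ?thesis
      using B_entry[of "Suc i" 0] ev ws(1) ws(2) that unfolding orthonormal_def by simp
  qed
  show "B $$ (0, Suc j) = 0" if "j < m" for j
    using B_sym[of 0 "Suc j"] B_col0[OF that] that by simp
qed

lemma mult_mat_vec_vCons_block:
  assumes B: "B \<in> carrier_mat (Suc m) (Suc m)" and y: "y \<in> carrier_vec m"
    and row0: "\<And>j. j < m \<Longrightarrow> B $$ (0, Suc j) = 0" and col0: "\<And>i. i < m \<Longrightarrow> B $$ (Suc i, 0) = 0"
  shows "B *\<^sub>v vCons c y = vCons (B $$ (0, 0) * c) (mat m m (\<lambda>(i, j). B $$ (Suc i, Suc j)) *\<^sub>v y)"
proof (rule eq_vecI)
  fix i assume "i < dim_vec (vCons (B $$ (0, 0) * c) (mat m m (\<lambda>(i, j). B $$ (Suc i, Suc j)) *\<^sub>v y))"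
  then have i: "i < Suc m" by simp
  have "(B *\<^sub>v vCons c y) $ i = B $$ (i, 0) * c + (\<Sum>j<m. B $$ (i, Suc j) * y $ j)"
    using B i y by (simp add: scalar_prod_def atLeast0LessThan sum.lessThan_Suc_shift
        del: sum.lessThan_Suc sum.op_ivl_Suc)
  then show "(B *\<^sub>v vCons c y) $ i = vCons (B $$ (0, 0) * c) (mat m m (\<lambda>(i, j). B $$ (Suc i, Suc j)) *\<^sub>v y) $ i"
    using i y row0 col0 by (cases i) (auto simp: scalar_prod_def atLeast0LessThan)
qed (use B in simp)

lemma orthonormal_eigenbasis_deflate:
  assumes B: "B \<in> carrier_mat (Suc m) (Suc m)"
    and row0: "\<And>j. j < m \<Longrightarrow> B $$ (0, Suc j) = 0" and col0: "\<And>i. i < m \<Longrightarrow> B $$ (Suc i, 0) = 0"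
    and eb: "orthonormal_eigenbasis m (mat m m (\<lambda>(i, j). B $$ (Suc i, Suc j))) us ds"
  shows "orthonormal_eigenbasis (Suc m) B (unit_vec (Suc m) 0 # map (vCons 0) us) (B $$ (0, 0) # ds)"
proof -
  have e0: "unit_vec (Suc m) 0 = vCons 1 (0\<^sub>v m)"
    by (intro eq_vecI) (auto simp: vec_index_vCons)
  have us: "us ! i \<in> carrier_vec m" if "i < m" for i
    using eb that orthonormal_nth_carrier unfolding orthonormal_eigenbasis_def by auto
  have "B *\<^sub>v vCons 0 (us ! i) = ds ! i \<cdot>\<^sub>v vCons 0 (us ! i)" if "i < m" for i
    using eb that mult_mat_vec_vCons_block[OF B us[OF that] row0 col0]
    unfolding orthonormal_eigenbasis_def by (auto simp: vCons_def split: nat.split)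
  moreover have "B *\<^sub>v unit_vec (Suc m) 0 = B $$ (0, 0) \<cdot>\<^sub>v unit_vec (Suc m) 0"
    unfolding e0 using mult_mat_vec_vCons_block[OF B _ row0 col0, of "0\<^sub>v m" 1] B
    by (auto simp: vCons_def split: nat.split)
  ultimately show ?thesis
    using eb orthonormal_unit_vec_vCons unfolding orthonormal_eigenbasis_def
    by (auto simp: nth_Cons split: nat.splits)
qed

lemma orthonormal_eigenbasis_transfer:
  assumes M: "M \<in> carrier_mat n n" and W: "W \<in> carrier_mat n n" "W\<^sup>T * W = 1\<^sub>m n"
    and B: "B \<in> carrier_mat n n" and MW: "M * W = W * B"
    and eb: "orthonormal_eigenbasis n B xs ds"
  shows "orthonormal_eigenbasis n M (map ((*\<^sub>v) W) xs) ds"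
proof -
  have "M *\<^sub>v (W *\<^sub>v x) = d \<cdot>\<^sub>v (W *\<^sub>v x)" if "x \<in> carrier_vec n" "B *\<^sub>v x = d \<cdot>\<^sub>v x" for x d
  proof -
    have "M *\<^sub>v (W *\<^sub>v x) = W *\<^sub>v (B *\<^sub>v x)"
      using MW M W(1) B that(1) by (metis assoc_mult_mat_vec)
    then show ?thesis using that W(1) by (simp add: mult_mat_vec)
  qed
  then show ?thesis
    using eb orthonormal_map_isometry[OF W] orthonormal_nth_carrier
    unfolding orthonormal_eigenbasis_def by auto
qed

theorem real_symmetric_orthonormal_eigenbasis:
  fixes M :: "real mat"
  assumes "M \<in> carrier_mat n n" and "M\<^sup>T = M"
  shows "\<exists>us ds. orthonormal_eigenbasis n M us ds"
  using assms
proof (induction n arbitrary: M)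
  case 0
  then show ?case by (auto simp: orthonormal_eigenbasis_def orthonormal_def)
next
  case (Suc m)
  note M = Suc.prems(1) and sym = Suc.prems(2)
  obtain e where "eigenvalue M e" using real_symmetric_has_eigenvalue[OF M sym] by blast
  then obtain v where v: "v \<in> carrier_vec (Suc m)" "v \<bullet> v = 1" "M *\<^sub>v v = e \<cdot>\<^sub>v v"
    using unit_eigenvector_exists[OF M] by blast
  then obtain ws where ws: "orthonormal (Suc m) ws" "length ws = Suc m" "ws ! 0 = v"
    using orthonormal_extend_unit_vec by (metis hd_conv_nth list.size(3) nat.distinct(1))
  define W where "W = mat_of_cols (Suc m) ws"
  define B where "B = W\<^sup>T * (M * W)"
  \<comment> \<open>Deflation: \<open>B\<close> is block diagonal with blocks \<open>e\<close> and the symmetric \<open>A\<close> below.\<close>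
  have W: "W \<in> carrier_mat (Suc m) (Suc m)" "W\<^sup>T * W = 1\<^sub>m (Suc m)" and MW: "M * W = W * B"
    using orthonormal_basis_congruence[OF M ws(1,2)] unfolding W_def B_def by auto
  have B: "B \<in> carrier_mat (Suc m) (Suc m)" unfolding B_def using W M by auto
  have "M *\<^sub>v ws ! 0 = e \<cdot>\<^sub>v ws ! 0" using v ws(3) by simp
  note B_block = eigenvector_congruence_block[OF M sym ws(1,2) this, folded W_def B_def]
  define A where "A = mat m m (\<lambda>(i, j). B $$ (Suc i, Suc j))"
  have "A \<in> carrier_mat m m" "A\<^sup>T = A"
    unfolding A_def using B_block(1) by auto
  then obtain us ds where "orthonormal_eigenbasis m A us ds"
    using Suc.IH by blast
  then have "orthonormal_eigenbasis (Suc m) B (unit_vec (Suc m) 0 # map (vCons 0) us) (B $$ (0, 0) # ds)"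
    unfolding A_def using B B_block(2,3) by (intro orthonormal_eigenbasis_deflate) auto
  then show ?case
    using orthonormal_eigenbasis_transfer[OF M W B MW] by blast
qed

lemma char_poly_orthonormal_eigenbasis:
  assumes M: "M \<in> carrier_mat n n" and eb: "orthonormal_eigenbasis n M us ds"
  shows "char_poly M = (\<Prod>a\<leftarrow>ds. [:- a, 1:])"
proof -
  let ?U = "mat_of_cols n us" and ?D = "mat n n (\<lambda>(i, j). if i = j then ds ! i else 0)"
  have us: "orthonormal n us" "length us = n" "length ds = n"
    and ev: "\<And>j. j < n \<Longrightarrow> M *\<^sub>v us ! j = ds ! j \<cdot>\<^sub>v us ! j"
    using eb unfolding orthonormal_eigenbasis_def by auto
  have U: "?U \<in> carrier_mat n n" using us by auto
  have "?D = ?U\<^sup>T * (M * ?U)"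
  proof (rule eq_matI)
    fix i j assume "i < dim_row (?U\<^sup>T * (M * ?U))" "j < dim_col (?U\<^sup>T * (M * ?U))"
    then have ij: "i < n" "j < n" using U by auto
    have set_us: "set us \<subseteq> carrier_vec n" using us(1) unfolding orthonormal_def by simp
    then have ui: "us ! i \<in> carrier_vec n" and uj: "us ! j \<in> carrier_vec n"
      using ij us(2) by auto
    have "(?U\<^sup>T * (M * ?U)) $$ (i, j) = us ! i \<bullet> (M *\<^sub>v us ! j)"
      using ij us(2) by (intro mat_of_cols_congruence_index[OF M set_us]) auto
    also have "\<dots> = ds ! j * (us ! i \<bullet> us ! j)"
      using ev[OF ij(2)] ui uj by (metis carrier_vecD scalar_prod_smult_right)
    also have "\<dots> = ?D $$ (i, j)"
      using us(1,2) ij unfolding orthonormal_def by simp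
    finally show "?D $$ (i, j) = (?U\<^sup>T * (M * ?U)) $$ (i, j)" by simp
  qed (use U in auto)
  then have "similar_mat_wit ?D M ?U\<^sup>T ?U"
    unfolding similar_mat_wit_def Let_def
    using U M orthonormal_mat_of_cols[OF us(1)] orthonormal_mat_of_cols_square[OF us(1,2)] us(2)
    by (auto simp: assoc_mult_mat[of _ n n _ n _ n])
  then have "similar_mat ?D M" unfolding similar_mat_def by blast
  then have "char_poly M = char_poly ?D" by (simp add: char_poly_similar)
  also have "\<dots> = (\<Prod>a\<leftarrow>diag_mat ?D. [:- a, 1:])"
    by (rule char_poly_upper_triangular[of _ n]) (auto simp: upper_triangular_def)
  also have "diag_mat ?D = ds"
    using us(3) unfolding diag_mat_def by (intro nth_equalityI) auto
  finally show ?thesis .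
qed

lemma proots_prod_linear: "proots (\<Prod>a\<leftarrow>ds. [:- a, 1:]) = mset (ds :: real list)"
proof (induction ds)
  case (Cons a ds)
  have "(\<Prod>a\<leftarrow>ds. [:- a, 1:]) \<noteq> 0" by auto
  then have "proots (\<Prod>a\<leftarrow>a # ds. [:- a, 1:]) = proots [:- a, 1:] + proots (\<Prod>a\<leftarrow>ds. [:- a, 1:])"
    by (simp only: list.map prod_list.Cons) (rule proots_mult, auto)
  then show ?case using Cons by simp
qed simp

lemma eigenvalues_desc_prod_linear:
  assumes "char_poly M = (\<Prod>a\<leftarrow>ds. [:- a, 1:])"
  shows "eigenvalues_desc M = rev (sort ds)"
  using assms unfolding eigenvalues_desc_def by (simp add: proots_prod_linear)

lemma eigenvalues_desc_antimono:
  assumes "i \<le> j" and "j < length (eigenvalues_desc M)"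
  shows "eigenvalues_desc M ! j \<le> eigenvalues_desc M ! i"
proof -
  have "sorted_wrt (\<ge>) (eigenvalues_desc M)"
    unfolding eigenvalues_desc_def by (simp add: sorted_wrt_rev)
  then show ?thesis
    using assms by (metis le_eq_less_or_eq order_refl sorted_wrt_nth_less)
qed

lemma orthonormal_eigenbasis_permute:
  assumes eb: "orthonormal_eigenbasis n M us ds" and p: "p permutes {..<n}"
  shows "orthonormal_eigenbasis n M (permute_list p us) (permute_list p ds)"
proof -
  have len: "length us = n" "length ds = n" using eb unfolding orthonormal_eigenbasis_def by auto
  have pi: "p i < n" if "i < n" for i using permutes_in_image[OF p] that by simp
  have inj: "p i = p j \<longleftrightarrow> i = j" for i j using permutes_inj[OF p] by (auto dest: injD)
  show ?thesis
    using eb p len pi inj unfolding orthonormal_eigenbasis_def orthonormal_def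
    by (auto simp: permute_list_nth)
qed

lemma real_symmetric_eigenbasis_desc:
  fixes M :: "real mat"
  assumes M: "M \<in> carrier_mat n n" and sym: "M\<^sup>T = M"
  shows "\<exists>us. orthonormal_eigenbasis n M us (eigenvalues_desc M)"
proof -
  obtain us ds where eb: "orthonormal_eigenbasis n M us ds"
    using real_symmetric_orthonormal_eigenbasis[OF M sym] by blast
  then have "eigenvalues_desc M = rev (sort ds)"
    using eigenvalues_desc_prod_linear char_poly_orthonormal_eigenbasis[OF M] by blast
  then have "mset (eigenvalues_desc M) = mset ds" by simp
  then obtain p where "p permutes {..<length ds}" "permute_list p ds = eigenvalues_desc M"
    by (rule mset_eq_permutation)
  then show ?thesis
    using orthonormal_eigenbasis_permute[OF eb] eb unfolding orthonormal_eigenbasis_def by metis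
qed

section \<open>Ky Fan's maximum principle\<close>

lemma orthonormal_eigenbasis_quadratic_form:
  fixes M :: "real mat"
  assumes M: "M \<in> carrier_mat n n" and sym: "M\<^sup>T = M"
    and eb: "orthonormal_eigenbasis n M us lam" and y: "y \<in> carrier_vec n"
  shows "y \<bullet> (M *\<^sub>v y) = (\<Sum>j<n. lam ! j * (us ! j \<bullet> y)\<^sup>2)"
proof -
  have us: "orthonormal n us" "length us = n"
    and ev: "\<And>j. j < n \<Longrightarrow> M *\<^sub>v us ! j = lam ! j \<cdot>\<^sub>v us ! j"
    using eb unfolding orthonormal_eigenbasis_def by auto
  have "us ! j \<bullet> (M *\<^sub>v y) = lam ! j * (us ! j \<bullet> y)" if "j < n" for j
  proof -
    have u: "us ! j \<in> carrier_vec n" using orthonormal_nth_carrier[OF us(1)] us(2) that by simp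
    then show ?thesis
      using symmetric_scalar_prod_mult[OF M sym u y] ev[OF that] comm_scalar_prod[OF y u] y by simp
  qed
  then show ?thesis
    using orthonormal_basis_scalar_prod[OF us y, of "M *\<^sub>v y"] M y
    by (simp add: power2_eq_square mult_ac)
qed

lemma orthonormal_weights:
  assumes us: "orthonormal n us" "length us = n" and ys: "orthonormal n ys"
  shows "\<And>j. j < n \<Longrightarrow> (\<Sum>i<length ys. (us ! j \<bullet> ys ! i)\<^sup>2) \<le> 1"
    and "(\<Sum>j<n. \<Sum>i<length ys. (us ! j \<bullet> ys ! i)\<^sup>2) = real (length ys)"
proof -
  have us_carrier: "us ! j \<in> carrier_vec n" if "j < n" for j
    using orthonormal_nth_carrier[OF us(1)] us(2) that by simp
  have ys_carrier: "ys ! i \<in> carrier_vec n" if "i < length ys" for i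
    using orthonormal_nth_carrier[OF ys that] .
  show "(\<Sum>i<length ys. (us ! j \<bullet> ys ! i)\<^sup>2) \<le> 1" if "j < n" for j
  proof -
    have "(\<Sum>i<length ys. (us ! j \<bullet> ys ! i)\<^sup>2) = (\<Sum>i<length ys. (ys ! i \<bullet> us ! j)\<^sup>2)"
      using comm_scalar_prod[OF us_carrier[OF that] ys_carrier] by simp
    also have "\<dots> \<le> us ! j \<bullet> us ! j"
      by (rule bessel_inequality[OF ys us_carrier[OF that]])
    finally show ?thesis using us that unfolding orthonormal_def by simp
  qed
  have "(\<Sum>j<n. (us ! j \<bullet> ys ! i)\<^sup>2) = 1" if "i < length ys" for i
    using orthonormal_basis_scalar_prod[OF us ys_carrier[OF that] ys_carrier[OF that]] ys that
    unfolding orthonormal_def by (simp add: power2_eq_square)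
  then show "(\<Sum>j<n. \<Sum>i<length ys. (us ! j \<bullet> ys ! i)\<^sup>2) = real (length ys)"
    by (subst sum.swap) simp
qed

lemma weighted_sum_le_sum_largest:
  fixes lam w :: "nat \<Rightarrow> real"
  assumes antimono: "\<And>i j. i \<le> j \<Longrightarrow> j < n \<Longrightarrow> lam j \<le> lam i"
    and w: "\<And>j. j < n \<Longrightarrow> 0 \<le> w j \<and> w j \<le> 1"
    and w_sum: "(\<Sum>j<n. w j) = real k" and k: "k \<le> n"
  shows "(\<Sum>j<n. lam j * w j) \<le> (\<Sum>j<k. lam j)"
proof -
  define c where "c = lam (k - 1)"
  have "lam j * w j \<le> c * w j + (if j < k then lam j - c else 0)" if j: "j < n" for j
  proof (cases "j < k")
    case True
    then have "(lam j - c) * (w j - 1) \<le> 0"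
      using antimono[of j "k - 1"] w[OF j] k unfolding c_def by (intro mult_nonneg_nonpos) auto
    then show ?thesis using True by (simp add: algebra_simps)
  next
    case False
    then have "lam j * w j \<le> c * w j"
      using antimono[of "k - 1" j] w[OF j] j unfolding c_def by (intro mult_right_mono) auto
    then show ?thesis using False by simp
  qed
  then have "(\<Sum>j<n. lam j * w j) \<le> (\<Sum>j<n. c * w j + (if j < k then lam j - c else 0))"
    by (intro sum_mono) auto
  also have "\<dots> = c * real k + (\<Sum>j<k. lam j - c)"
  proof -
    have "{..<n} \<inter> {j. j < k} = {..<k}" using k by auto
    moreover have "(\<Sum>j<n. c * w j) = c * real k" using w_sum by (simp flip: sum_distrib_left)
    ultimately show ?thesis by (simp add: sum.distrib sum.If_cases)
  qed
  also have "\<dots> = (\<Sum>j<k. lam j)"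
    by (simp add: sum_subtractf)
  finally show ?thesis .
qed

lemma S_k_eq_sum_nth:
  "k \<le> length (eigenvalues_desc M) \<Longrightarrow> S_k k M = (\<Sum>j<k. eigenvalues_desc M ! j)"
  unfolding S_k_def by (simp add: sum_list_sum_nth lessThan_atLeast0 min_def)

theorem ky_fan_orthonormal:
  fixes M :: "real mat"
  assumes M: "M \<in> carrier_mat n n" and sym: "M\<^sup>T = M" and ys: "orthonormal n ys"
  shows "(\<Sum>i<length ys. ys ! i \<bullet> (M *\<^sub>v ys ! i)) \<le> S_k (length ys) M"
proof -
  define k where "k = length ys"
  define lam where "lam = eigenvalues_desc M"
  obtain us where eb: "orthonormal_eigenbasis n M us lam"
    using real_symmetric_eigenbasis_desc[OF M sym] unfolding lam_def by blast
  have us: "orthonormal n us" "length us = n" and len: "length lam = n"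
    using eb unfolding orthonormal_eigenbasis_def by auto
  define w where "w j = (\<Sum>i<k. (us ! j \<bullet> ys ! i)\<^sup>2)" for j
  have w: "0 \<le> w j \<and> w j \<le> 1" if "j < n" for j
    using orthonormal_weights(1)[OF us ys that] unfolding w_def k_def by (simp add: sum_nonneg)
  have w_sum: "(\<Sum>j<n. w j) = real k"
    using orthonormal_weights(2)[OF us ys] unfolding w_def k_def .
  have "real k \<le> (\<Sum>j<n. 1)"
    unfolding w_sum[symmetric] using w by (intro sum_mono) auto
  then have k: "k \<le> n" by simp
  have "(\<Sum>i<k. ys ! i \<bullet> (M *\<^sub>v ys ! i)) = (\<Sum>i<k. \<Sum>j<n. lam ! j * (us ! j \<bullet> ys ! i)\<^sup>2)"
    using orthonormal_eigenbasis_quadratic_form[OF M sym eb] orthonormal_nth_carrier[OF ys]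
    unfolding k_def by simp
  also have "\<dots> = (\<Sum>j<n. lam ! j * w j)"
    unfolding w_def by (subst sum.swap) (simp add: sum_distrib_left)
  also have "\<dots> \<le> (\<Sum>j<k. lam ! j)"
    using eigenvalues_desc_antimono len w w_sum k unfolding lam_def
    by (intro weighted_sum_le_sum_largest) auto
  also have "\<dots> = S_k k M"
    using S_k_eq_sum_nth k len unfolding lam_def by simp
  finally show ?thesis unfolding k_def .
qed

definition rayleigh :: "real mat \<Rightarrow> real vec \<Rightarrow> real" where
  "rayleigh M x = (x \<bullet> (M *\<^sub>v x)) / (x \<bullet> x)"

lemma rayleigh_normalized:
  assumes M: "M \<in> carrier_mat n n" and x: "x \<in> carrier_vec n"
  shows "normalized x \<bullet> (M *\<^sub>v normalized x) = rayleigh M x"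
proof -
  have "0 \<le> x \<bullet> x" using conjugate_square_ge_0_vec[of x] by simp
  then show ?thesis
    unfolding normalized_def rayleigh_def using M x by (simp add: mult_mat_vec field_simps)
qed

theorem ky_fan_rayleigh:
  fixes M :: "real mat" and x :: "nat \<Rightarrow> real vec"
  assumes M: "M \<in> carrier_mat n n" and sym: "M\<^sup>T = M"
    and x: "\<And>i. i < k \<Longrightarrow> x i \<in> carrier_vec n" "\<And>i. i < k \<Longrightarrow> x i \<noteq> 0\<^sub>v n"
    and orth: "\<And>i j. i < k \<Longrightarrow> j < k \<Longrightarrow> i \<noteq> j \<Longrightarrow> x i \<bullet> x j = 0"
  shows "(\<Sum>i<k. rayleigh M (x i)) \<le> S_k k M"
proof -
  define ys where "ys = map normalized (map x [0..<k])"
  have "0\<^sub>v n \<notin> set (map x [0..<k])"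
  proof
    assume "0\<^sub>v n \<in> set (map x [0..<k])"
    then obtain i where "i < k" "x i = 0\<^sub>v n" by auto
    then show False using x(2) by blast
  qed
  then have ys: "orthonormal n ys"
    unfolding ys_def using x(1) orth by (intro orthonormal_map_normalized) auto
  have "ys ! i \<bullet> (M *\<^sub>v ys ! i) = rayleigh M (x i)" if "i < k" for i
    unfolding ys_def using rayleigh_normalized[OF M x(1)[OF that]] that by simp
  moreover have "length ys = k" unfolding ys_def by simp
  ultimately have "(\<Sum>i<k. rayleigh M (x i)) = (\<Sum>i<length ys. ys ! i \<bullet> (M *\<^sub>v ys ! i))"
    by (intro sum.cong) auto
  also have "\<dots> \<le> S_k k M"
    using ky_fan_orthonormal[OF M sym ys] \<open>length ys = k\<close> by simp
  finally show ?thesis .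
qed

section \<open>Test vectors for \<open>A_alpha\<close> of a regular graph\<close>

lemma A_alpha_carrier: "A_alpha \<alpha> n E \<in> carrier_mat n n"
  unfolding A_alpha_def deg_mat_def adj_mat_def by auto

lemma A_alpha_index:
  assumes "i < n" "j < n"
  shows "A_alpha \<alpha> n E $$ (i, j) =
    (if i = j then \<alpha> * real (degree n E i) else 0) + (1 - \<alpha>) * (if E i j then 1 else 0)"
  using assms unfolding A_alpha_def deg_mat_def adj_mat_def by auto

lemma A_alpha_transpose:
  assumes "simple_graph n E"
  shows "(A_alpha \<alpha> n E)\<^sup>T = A_alpha \<alpha> n E"
  using assms A_alpha_carrier[of \<alpha> n E] unfolding simple_graph_def
  by (intro eq_matI) (auto simp: A_alpha_index)

lemma regular_0_no_edges:
  assumes "regular n E 0" "i < n" "j < n"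
  shows "\<not> E i j"
  using assms unfolding regular_def degree_def by auto

lemma A_alpha_regular_0:
  assumes "regular n E 0"
  shows "A_alpha \<alpha> n E = 0\<^sub>m n n"
  using assms regular_0_no_edges[OF assms] A_alpha_carrier[of \<alpha> n E]
  unfolding regular_def by (intro eq_matI) (auto simp: A_alpha_index)

lemma S_k_zero_mat: "S_k k (0\<^sub>m n n :: real mat) = 0"
proof -
  have "char_poly (0\<^sub>m n n :: real mat) = (\<Prod>a\<leftarrow>diag_mat (0\<^sub>m n n). [:- a, 1:])"
    by (rule char_poly_upper_triangular[of _ n]) (auto simp: upper_triangular_def)
  also have "diag_mat (0\<^sub>m n n :: real mat) = replicate n 0"
    by (intro nth_equalityI) (auto simp: diag_mat_def)
  finally have "eigenvalues_desc (0\<^sub>m n n :: real mat) = rev (sort (replicate n 0))"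
    by (rule eigenvalues_desc_prod_linear)
  then show ?thesis unfolding S_k_def by (simp add: sum_list_replicate)
qed

definition adjacency_form :: "nat \<Rightarrow> (nat \<Rightarrow> nat \<Rightarrow> bool) \<Rightarrow> real vec \<Rightarrow> real" where
  "adjacency_form n E x = (\<Sum>p<n. \<Sum>q<n. if E p q then x $ p * x $ q else 0)"

lemma rayleigh_A_alpha:
  assumes reg: "regular n E r" and x: "x \<in> carrier_vec n" "x \<noteq> 0\<^sub>v n"
  shows "rayleigh (A_alpha \<alpha> n E) x = \<alpha> * real r + (1 - \<alpha>) * adjacency_form n E x / (x \<bullet> x)"
proof -
  have row: "(A_alpha \<alpha> n E *\<^sub>v x) $ p = \<alpha> * real r * x $ p + (1 - \<alpha>) * (\<Sum>q<n. if E p q then x $ q else 0)"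
    if p: "p < n" for p
  proof -
    have "(A_alpha \<alpha> n E *\<^sub>v x) $ p = (\<Sum>q<n. A_alpha \<alpha> n E $$ (p, q) * x $ q)"
      using p x A_alpha_carrier[of \<alpha> n E] by (simp add: scalar_prod_def lessThan_atLeast0)
    also have "\<dots> = (\<Sum>q<n. (if p = q then \<alpha> * real r * x $ q else 0) + (1 - \<alpha>) * (if E p q then x $ q else 0))"
      using p reg unfolding regular_def by (intro sum.cong refl) (auto simp: A_alpha_index algebra_simps)
    finally show ?thesis using p by (simp add: sum.distrib sum_distrib_left)
  qed
  have "x \<bullet> (A_alpha \<alpha> n E *\<^sub>v x) = (\<Sum>p<n. x $ p * (A_alpha \<alpha> n E *\<^sub>v x) $ p)"
    using x A_alpha_carrier[of \<alpha> n E] by (simp add: scalar_prod_def lessThan_atLeast0)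
  also have "\<dots> = \<alpha> * real r * (x \<bullet> x) + (1 - \<alpha>) * adjacency_form n E x"
    using x unfolding adjacency_form_def
    by (simp add: row algebra_simps sum.distrib sum_distrib_left scalar_prod_def lessThan_atLeast0 if_distrib
        cong: if_cong)
  finally show ?thesis
    using x conjugate_square_greater_0_vec[OF x(1)] unfolding rayleigh_def by (simp add: field_simps)
qed

(* The entry at vertex cs ! t is s t (for distinct cs); summing over positions avoids inverting nth. *)
definition vertex_vec :: "nat \<Rightarrow> nat list \<Rightarrow> (nat \<Rightarrow> real) \<Rightarrow> real vec" where
  "vertex_vec n cs s = vec n (\<lambda>p. \<Sum>t<length cs. if cs ! t = p then s t else 0)"

lemma vertex_vec_carrier [simp]: "vertex_vec n cs s \<in> carrier_vec n"
  unfolding vertex_vec_def by simp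

lemma sum_vertex_vec:
  assumes cs: "set cs \<subseteq> {..<n}"
  shows "(\<Sum>p<n. vertex_vec n cs s $ p * h p) = (\<Sum>t<length cs. s t * h (cs ! t))"
proof -
  have "(\<Sum>p<n. vertex_vec n cs s $ p * h p) = (\<Sum>p<n. \<Sum>t<length cs. if cs ! t = p then s t * h p else 0)"
    unfolding vertex_vec_def by (intro sum.cong refl) (auto simp: sum_distrib_right intro!: sum.cong)
  also have "\<dots> = (\<Sum>t<length cs. \<Sum>p<n. if cs ! t = p then s t * h p else 0)"
    by (rule sum.swap)
  also have "\<dots> = (\<Sum>t<length cs. s t * h (cs ! t))"
  proof -
    have "cs ! t < n" if "t < length cs" for t using cs nth_mem[OF that] by auto
    then show ?thesis by (intro sum.cong refl) simp
  qed
  finally show ?thesis .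
qed

lemma vertex_vec_scalar_prod:
  assumes "set cs \<subseteq> {..<n}" and "y \<in> carrier_vec n"
  shows "vertex_vec n cs s \<bullet> y = (\<Sum>t<length cs. s t * y $ (cs ! t))"
  using sum_vertex_vec[OF assms(1)] assms(2) by (simp add: scalar_prod_def lessThan_atLeast0)

lemma vertex_vec_nth:
  assumes cs: "set cs \<subseteq> {..<n}" and "distinct cs" and t: "t < length cs"
  shows "vertex_vec n cs s $ (cs ! t) = s t"
proof -
  have "cs ! t < n" using cs t nth_mem by fastforce
  then have "vertex_vec n cs s $ (cs ! t) = (\<Sum>t'<length cs. if cs ! t' = cs ! t then s t' else 0)"
    unfolding vertex_vec_def by simp
  also have "\<dots> = (\<Sum>t'<length cs. if t' = t then s t' else 0)"
    using assms by (intro sum.cong refl) (auto simp: nth_eq_iff_index_eq)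
  finally show ?thesis using t by simp
qed

lemma vertex_vec_outside:
  assumes "p \<notin> set cs" and "p < n"
  shows "vertex_vec n cs s $ p = 0"
  using assms unfolding vertex_vec_def by (auto intro!: sum.neutral)

lemma vertex_vec_orthogonal:
  assumes "set cs \<subseteq> {..<n}" and "set cs' \<subseteq> {..<n}" and "set cs \<inter> set cs' = {}"
  shows "vertex_vec n cs s \<bullet> vertex_vec n cs' s' = 0"
proof -
  have "vertex_vec n cs' s' $ (cs ! t) = 0" if "t < length cs" for t
    using assms nth_mem[OF that] by (intro vertex_vec_outside) auto
  then show ?thesis using vertex_vec_scalar_prod[OF assms(1)] by simp
qed

lemma vertex_vec_norm:
  assumes "set cs \<subseteq> {..<n}" and "distinct cs"
  shows "vertex_vec n cs s \<bullet> vertex_vec n cs s = (\<Sum>t<length cs. s t * s t)"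
  using vertex_vec_scalar_prod[OF assms(1)] vertex_vec_nth[OF assms] by simp

lemma adjacency_form_vertex_vec:
  assumes cs: "set cs \<subseteq> {..<n}"
  shows "adjacency_form n E (vertex_vec n cs s) =
    (\<Sum>t<length cs. \<Sum>t'<length cs. if E (cs ! t) (cs ! t') then s t * s t' else 0)"
proof -
  let ?x = "vertex_vec n cs s"
  have "adjacency_form n E ?x = (\<Sum>p<n. ?x $ p * (\<Sum>q<n. ?x $ q * (if E p q then 1 else 0)))"
    unfolding adjacency_form_def by (intro sum.cong refl) (auto simp: sum_distrib_left intro!: sum.cong)
  also have "\<dots> = (\<Sum>p<n. ?x $ p * (\<Sum>t'<length cs. s t' * (if E p (cs ! t') then 1 else 0)))"
    by (simp add: sum_vertex_vec[OF cs])
  also have "\<dots> = (\<Sum>t<length cs. s t * (\<Sum>t'<length cs. s t' * (if E (cs ! t) (cs ! t') then 1 else 0)))"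
    by (rule sum_vertex_vec[OF cs])
  also have "\<dots> = (\<Sum>t<length cs. \<Sum>t'<length cs. if E (cs ! t) (cs ! t') then s t * s t' else 0)"
    by (intro sum.cong refl) (auto simp: sum_distrib_left intro!: sum.cong)
  finally show ?thesis .
qed

definition ones_vec :: "nat \<Rightarrow> real vec" where
  "ones_vec n = vec n (\<lambda>_. 1)"

lemma ones_vec_carrier [simp]: "ones_vec n \<in> carrier_vec n"
  unfolding ones_vec_def by simp

lemma ones_vec_vertex_vec:
  assumes "set cs \<subseteq> {..<n}"
  shows "ones_vec n \<bullet> vertex_vec n cs s = (\<Sum>t<length cs. s t)"
proof -
  have "cs ! t < n" if "t < length cs" for t using assms nth_mem[OF that] by auto
  then show ?thesis
    using comm_scalar_prod[OF ones_vec_carrier vertex_vec_carrier] vertex_vec_scalar_prod[OF assms]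
    unfolding ones_vec_def by simp
qed

lemma degree_as_sum:
  assumes "p < n"
  shows "(\<Sum>q<n. if E p q then 1 else 0) = real (degree n E p)"
proof -
  have "{..<n} \<inter> {q. E p q} = {q. q < n \<and> E p q}" by auto
  then show ?thesis unfolding degree_def by (simp add: sum.If_cases)
qed

lemma rayleigh_A_alpha_ones_vec:
  assumes reg: "regular n E r" and n: "n \<ge> 1"
  shows "rayleigh (A_alpha \<alpha> n E) (ones_vec n) = real r"
proof -
  have norm: "ones_vec n \<bullet> ones_vec n = real n"
    unfolding ones_vec_def by (simp add: scalar_prod_def)
  have "adjacency_form n E (ones_vec n) = (\<Sum>p<n. \<Sum>q<n. if E p q then 1 else 0)"
    unfolding adjacency_form_def ones_vec_def by (intro sum.cong refl) auto
  also have "\<dots> = real n * real r"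
    using reg degree_as_sum unfolding regular_def by simp
  finally have "adjacency_form n E (ones_vec n) = real n * real r" .
  moreover have "ones_vec n \<noteq> 0\<^sub>v n" using norm n by auto
  ultimately show ?thesis
    using rayleigh_A_alpha[OF reg] norm n by (simp add: field_simps)
qed

definition edge_vec :: "nat \<Rightarrow> nat \<Rightarrow> nat \<Rightarrow> real vec" where
  "edge_vec n a b = vertex_vec n [a, b] (\<lambda>t. if t = 0 then 1 else -1)"

lemma edge_vec_rayleigh:
  assumes G: "simple_graph n E" and reg: "regular n E r"
    and ab: "a < n" "b < n" "a \<noteq> b" "E a b"
  shows "edge_vec n a b \<noteq> 0\<^sub>v n" "ones_vec n \<bullet> edge_vec n a b = 0"
    and "rayleigh (A_alpha \<alpha> n E) (edge_vec n a b) = \<alpha> * real r - (1 - \<alpha>)"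
proof -
  have cs: "set [a, b] \<subseteq> {..<n}" and d: "distinct [a, b]" using ab by auto
  have two: "{..<2::nat} = {0, 1}" by auto
  have norm: "edge_vec n a b \<bullet> edge_vec n a b = 2"
    unfolding edge_vec_def vertex_vec_norm[OF cs d] by (simp add: two)
  then show nz: "edge_vec n a b \<noteq> 0\<^sub>v n" by auto
  show "ones_vec n \<bullet> edge_vec n a b = 0"
    unfolding edge_vec_def ones_vec_vertex_vec[OF cs] by (simp add: two)
  have "E b a" "\<not> E a a" "\<not> E b b" using G ab unfolding simple_graph_def by auto
  then have "adjacency_form n E (edge_vec n a b) = -2"
    unfolding edge_vec_def adjacency_form_vertex_vec[OF cs] using ab by (simp add: two)
  then show "rayleigh (A_alpha \<alpha> n E) (edge_vec n a b) = \<alpha> * real r - (1 - \<alpha>)"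
    using rayleigh_A_alpha[OF reg _ nz] norm by (simp add: edge_vec_def)
qed

lemma sum_cycle_neighbours:
  fixes f :: "nat \<Rightarrow> real"
  assumes g: "3 \<le> g" and t: "t < g"
  shows "(\<Sum>t'<g. if t' = (t + 1) mod g \<or> t = (t' + 1) mod g then f t' else 0)
    = f (if t + 1 = g then 0 else t + 1) + f (if t = 0 then g - 1 else t - 1)"
proof -
  let ?succ = "if t + 1 = g then 0 else t + 1" and ?pred = "if t = 0 then g - 1 else t - 1"
  have "t' = (t + 1) mod g \<or> t = (t' + 1) mod g \<longleftrightarrow> t' = ?succ \<or> t' = ?pred" if t': "t' < g" for t'
  proof -
    have "(t + 1) mod g = ?succ" "(t' + 1) mod g = (if t' + 1 = g then 0 else t' + 1)"
      using t t' by auto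
    then show ?thesis using g t t' by auto
  qed
  then have "{..<g} \<inter> {t'. t' = (t + 1) mod g \<or> t = (t' + 1) mod g}
      = {t'. t' < g \<and> (t' = ?succ \<or> t' = ?pred)}"
    by blast
  also have "\<dots> = {?succ, ?pred}" using g t by auto
  finally have "{..<g} \<inter> {t'. t' = (t + 1) mod g \<or> t = (t' + 1) mod g} = {?succ, ?pred}" .
  moreover have "?succ \<noteq> ?pred" using g t by auto
  ultimately show ?thesis by (simp add: sum.If_cases)
qed

lemma sum_two_exceptions:
  assumes "a \<noteq> b" "a < g" "b < g"
  shows "(\<Sum>t<g. if t = a \<or> t = b then c else d) = 2 * c + (real g - 2) * (d :: real)"
proof -
  have "(\<Sum>t<g. if t = a \<or> t = b then c else d) = (\<Sum>t<g. d + (if t = a \<or> t = b then c - d else 0))"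
    by (intro sum.cong refl) auto
  also have "{..<g} \<inter> {t. t = a \<or> t = b} = {a, b}" using assms by auto
  then have "(\<Sum>t<g. d + (if t = a \<or> t = b then c - d else 0)) = real g * d + 2 * (c - d)"
    using assms by (simp add: sum.distrib sum.If_cases)
  finally show ?thesis by (simp add: algebra_simps)
qed

definition cycle_vec :: "nat \<Rightarrow> nat list \<Rightarrow> real vec" where
  "cycle_vec n cs = vertex_vec n cs (\<lambda>t. if t < length cs div 2 then 1 else -1)"

lemma adjacency_form_cycle_vec:
  assumes C: "induced_cycle n E cs" and ev: "even (length cs)"
  shows "adjacency_form n E (cycle_vec n cs) = 2 * real (length cs) - 8"
proof -
  define g where "g = length cs"
  define h where "h = g div 2"
  define s where "s t = (if t < h then 1 else -1 :: real)" for t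
  have g: "3 \<le> g" and cs: "set cs \<subseteq> {..<n}"
    and adj: "\<And>i j. i < g \<Longrightarrow> j < g \<Longrightarrow> E (cs ! i) (cs ! j) \<longleftrightarrow> (j = (i + 1) mod g \<or> i = (j + 1) mod g)"
    using C unfolding induced_cycle_def g_def Let_def by auto
  have gh: "g = 2 * h" and h: "2 \<le> h" using ev g unfolding h_def g_def by auto
  have "adjacency_form n E (cycle_vec n cs) =
      (\<Sum>t<g. \<Sum>t'<g. if t' = (t + 1) mod g \<or> t = (t' + 1) mod g then s t * s t' else 0)"
    unfolding cycle_vec_def adjacency_form_vertex_vec[OF cs] g_def[symmetric] h_def[symmetric] s_def[symmetric]
    by (intro sum.cong refl) (simp add: adj)
  \<comment> \<open>Of the two neighbours of position \<open>t\<close>, the successor lies in the other half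
    exactly for \<open>t = h - 1, g - 1\<close> and the predecessor exactly for \<open>t = 0, h\<close>.\<close>
  also have "\<dots> = (\<Sum>t<g. (if t = h - 1 \<or> t = g - 1 then -1 else 1) + (if t = 0 \<or> t = h then -1 else 1))"
  proof (intro sum.cong refl)
    fix t assume "t \<in> {..<g}"
    then have t: "t < g" by simp
    show "(\<Sum>t'<g. if t' = (t + 1) mod g \<or> t = (t' + 1) mod g then s t * s t' else 0) =
      (if t = h - 1 \<or> t = g - 1 then -1 else 1) + (if t = 0 \<or> t = h then -1 else 1)"
      unfolding sum_cycle_neighbours[OF g t] using t gh h by (auto simp: s_def)
  qed
  also have "\<dots> = 2 * real g - 8"
    using gh h by (simp add: sum.distrib sum_two_exceptions)
  finally show ?thesis unfolding g_def .
qed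

lemma cycle_vec_rayleigh:
  assumes reg: "regular n E r" and C: "induced_cycle n E cs" and ev: "even (length cs)"
  shows "cycle_vec n cs \<noteq> 0\<^sub>v n" "ones_vec n \<bullet> cycle_vec n cs = 0"
    and "rayleigh (A_alpha \<alpha> n E) (cycle_vec n cs)
       = \<alpha> * real r + 2 * (1 - \<alpha>) * (1 - 4 / real (length cs))"
proof -
  define g where "g = length cs"
  define h where "h = g div 2"
  define s where "s t = (if t < h then 1 else -1 :: real)" for t
  have g: "3 \<le> g" and d: "distinct cs" and cs: "set cs \<subseteq> {..<n}"
    using C unfolding induced_cycle_def g_def Let_def by auto
  have gh: "g = 2 * h" using ev unfolding h_def g_def by auto
  have cv: "cycle_vec n cs = vertex_vec n cs s" unfolding cycle_vec_def s_def h_def g_def ..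
  have "s t * s t = 1" for t unfolding s_def by simp
  then have norm: "cycle_vec n cs \<bullet> cycle_vec n cs = real g"
    unfolding cv vertex_vec_norm[OF cs d] g_def by simp
  then show nz: "cycle_vec n cs \<noteq> 0\<^sub>v n" using g by auto
  have "{..<g} \<inter> {t. t < h} = {..<h}" "{..<g} - {t. t < h} = {h..<g}" using gh by auto
  then show "ones_vec n \<bullet> cycle_vec n cs = 0"
    unfolding cv ones_vec_vertex_vec[OF cs] g_def[symmetric] s_def using gh
    by (simp add: sum.If_cases Diff_eq[symmetric])
  have "rayleigh (A_alpha \<alpha> n E) (cycle_vec n cs) = \<alpha> * real r + (1 - \<alpha>) * (2 * real g - 8) / real g"
    using rayleigh_A_alpha[OF reg _ nz] norm adjacency_form_cycle_vec[OF C ev]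
    unfolding cv g_def by simp
  also have "\<dots> = \<alpha> * real r + 2 * (1 - \<alpha>) * (1 - 4 / real g)"
    using g by (simp add: field_simps)
  finally show "rayleigh (A_alpha \<alpha> n E) (cycle_vec n cs)
       = \<alpha> * real r + 2 * (1 - \<alpha>) * (1 - 4 / real (length cs))"
    unfolding g_def .
qed

lemma clique_has_edge:
  assumes G: "simple_graph n E" and reg: "regular n E r" and r: "r > 0"
    and K: "is_clique n E K"
  shows "\<exists>a\<in>K. \<exists>b\<in>K. a \<noteq> b \<and> E a b"
proof -
  obtain u where u: "u \<in> K" using K unfolding is_clique_def by auto
  have Kn: "K \<subseteq> {0..<n}" and complete: "\<And>a b. a \<in> K \<Longrightarrow> b \<in> K \<Longrightarrow> a \<noteq> b \<Longrightarrow> E a b"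
    using K unfolding is_clique_def complete_set_def by auto
  have "card {w. w < n \<and> E u w} = r" using reg u Kn unfolding regular_def degree_def by auto
  then have "{w. w < n \<and> E u w} \<noteq> {}" using r card_gt_0_iff by metis
  then obtain w where w: "w < n" "E u w" by blast
  have "w \<noteq> u" "E w u" using G u Kn w unfolding simple_graph_def by auto
  then have "complete_set n E {u, w}"
    using u Kn w unfolding complete_set_def by auto
  have "K \<noteq> {u}"
  proof
    assume "K = {u}"
    then have "{u, w} = K"
      using K \<open>complete_set n E {u, w}\<close> unfolding is_clique_def by blast
    then show False using \<open>K = {u}\<close> \<open>w \<noteq> u\<close> by auto
  qed
  then obtain v where "v \<in> K" "v \<noteq> u" using u by blast
  then show ?thesis using u complete by blast
qed

lemma S_k_A_alpha_ge_test_vectors: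
  assumes G: "simple_graph n E" and reg: "regular n E r" and n: "n \<ge> 1"
    and f: "\<And>i. i < m \<Longrightarrow> f i \<in> carrier_vec n" "\<And>i. i < m \<Longrightarrow> f i \<noteq> 0\<^sub>v n"
    and orth: "\<And>i j. i < m \<Longrightarrow> j < m \<Longrightarrow> i \<noteq> j \<Longrightarrow> f i \<bullet> f j = 0"
    and balanced: "\<And>i. i < m \<Longrightarrow> ones_vec n \<bullet> f i = 0"
  shows "real r + (\<Sum>i<m. rayleigh (A_alpha \<alpha> n E) (f i)) \<le> S_k (Suc m) (A_alpha \<alpha> n E)"
proof -
  define x where "x = case_nat (ones_vec n) f"
  have "ones_vec n \<noteq> 0\<^sub>v n"
    using n by (auto simp: ones_vec_def dest!: arg_cong[of _ _ "\<lambda>v. v $ 0"])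
  then have "(\<Sum>i<Suc m. rayleigh (A_alpha \<alpha> n E) (x i)) \<le> S_k (Suc m) (A_alpha \<alpha> n E)"
    using f orth balanced comm_scalar_prod[OF f(1) ones_vec_carrier]
    by (intro ky_fan_rayleigh[OF A_alpha_carrier A_alpha_transpose[OF G]])
      (auto simp: x_def split: nat.splits)
  then show ?thesis
    unfolding sum.lessThan_Suc_shift x_def using rayleigh_A_alpha_ones_vec[OF reg n] by simp
qed

lemma S_k_A_alpha_disjoint_edges:
  assumes G: "simple_graph n E" and reg: "regular n E r" and n: "n \<ge> 1"
    and edges: "\<And>i. i < m \<Longrightarrow> a i < n \<and> b i < n \<and> a i \<noteq> b i \<and> E (a i) (b i)"
    and disjoint: "\<And>i j. i < m \<Longrightarrow> j < m \<Longrightarrow> i \<noteq> j \<Longrightarrow> {a i, b i} \<inter> {a j, b j} = {}"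
  shows "\<alpha> * real (Suc m) * real r + (1 - \<alpha>) * (real r - real (Suc m) + 1)
    \<le> S_k (Suc m) (A_alpha \<alpha> n E)"
proof -
  let ?f = "\<lambda>i. edge_vec n (a i) (b i)"
  have "real r + (\<Sum>i<m. rayleigh (A_alpha \<alpha> n E) (?f i)) \<le> S_k (Suc m) (A_alpha \<alpha> n E)"
  proof (rule S_k_A_alpha_ge_test_vectors[OF G reg n])
    show "?f i \<bullet> ?f j = 0" if "i < m" "j < m" "i \<noteq> j" for i j
      unfolding edge_vec_def using edges[OF that(1)] edges[OF that(2)] disjoint[OF that]
      by (intro vertex_vec_orthogonal) auto
  qed (use edges edge_vec_rayleigh[OF G reg] in \<open>auto simp: edge_vec_def\<close>)
  moreover have "(\<Sum>i<m. rayleigh (A_alpha \<alpha> n E) (?f i)) = real m * (\<alpha> * real r - (1 - \<alpha>))"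
    using edges edge_vec_rayleigh(3)[OF G reg] by simp
  ultimately show ?thesis by (simp add: algebra_simps)
qed

lemma S_k_A_alpha_disjoint_cliques:
  assumes G: "simple_graph n E" and reg: "regular n E r" and n: "n \<ge> 1" and \<alpha>: "\<alpha> \<le> 1"
    and cliques: "\<And>i. i < m \<Longrightarrow> is_clique n E (Q i)"
    and disjoint: "\<And>i j. i < m \<Longrightarrow> j < m \<Longrightarrow> i \<noteq> j \<Longrightarrow> Q i \<inter> Q j = {}"
  shows "\<alpha> * real (Suc m) * real r + (1 - \<alpha>) * (real r - real (Suc m) + 1)
    \<le> S_k (Suc m) (A_alpha \<alpha> n E)"
proof (cases "r = 0")
  case True
  then show ?thesis
    using A_alpha_regular_0[of n E \<alpha>] reg S_k_zero_mat \<alpha> by (simp add: mult_nonneg_nonpos)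
next
  case False
  then have "\<forall>i\<in>{..<m}. \<exists>e. fst e \<in> Q i \<and> snd e \<in> Q i \<and> fst e \<noteq> snd e \<and> E (fst e) (snd e)"
    using clique_has_edge[OF G reg] cliques by fastforce
  from bchoice[OF this] obtain e where
    e: "\<forall>i\<in>{..<m}. fst (e i) \<in> Q i \<and> snd (e i) \<in> Q i \<and> fst (e i) \<noteq> snd (e i) \<and> E (fst (e i)) (snd (e i))"
    by blast
  have "Q i \<subseteq> {0..<n}" if "i < m" for i
    using cliques[OF that] unfolding is_clique_def complete_set_def by simp
  then show ?thesis
    using e disjoint
    by (intro S_k_A_alpha_disjoint_edges[OF G reg n, of m "\<lambda>i. fst (e i)" "\<lambda>i. snd (e i)"]) fastforce+
qed

lemma S_k_A_alpha_disjoint_even_cycles: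
  assumes G: "simple_graph n E" and reg: "regular n E r" and n: "n \<ge> 1"
    and cycles: "\<And>i. i < m \<Longrightarrow> induced_cycle n E (C i) \<and> even (length (C i))"
    and disjoint: "\<And>i j. i < m \<Longrightarrow> j < m \<Longrightarrow> i \<noteq> j \<Longrightarrow> set (C i) \<inter> set (C j) = {}"
  shows "(\<alpha> * real (Suc m) + 1 - \<alpha>) * real r + 2 * (1 - \<alpha>) * (\<Sum>i<m. 1 - 4 / real (length (C i)))
    \<le> S_k (Suc m) (A_alpha \<alpha> n E)"
proof -
  let ?f = "\<lambda>i. cycle_vec n (C i)"
  have "real r + (\<Sum>i<m. rayleigh (A_alpha \<alpha> n E) (?f i)) \<le> S_k (Suc m) (A_alpha \<alpha> n E)"
  proof (rule S_k_A_alpha_ge_test_vectors[OF G reg n])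
    show "?f i \<bullet> ?f j = 0" if "i < m" "j < m" "i \<noteq> j" for i j
      unfolding cycle_vec_def using cycles[OF that(1)] cycles[OF that(2)] disjoint[OF that]
      by (intro vertex_vec_orthogonal) (auto simp: induced_cycle_def Let_def)
  qed (use cycles cycle_vec_rayleigh[OF reg] in \<open>auto simp: cycle_vec_def\<close>)
  moreover have "(\<Sum>i<m. rayleigh (A_alpha \<alpha> n E) (?f i))
      = real m * \<alpha> * real r + 2 * (1 - \<alpha>) * (\<Sum>i<m. 1 - 4 / real (length (C i)))"
    using cycles cycle_vec_rayleigh(3)[OF reg] by (simp add: sum.distrib sum_distrib_left)
  ultimately show ?thesis by (simp add: algebra_simps)
qed

theorem theorem5p2:
  fixes n r :: nat and E :: "nat \<Rightarrow> nat \<Rightarrow> bool" and \<alpha> :: real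
  assumes "n \<ge> 1"
    and "simple_graph n E"
    and "regular n E r"
    and "0 \<le> \<alpha>" and "\<alpha> \<le> 1"
  shows
    "(\<forall>(t::nat) (Q::nat \<Rightarrow> nat set).
        (\<forall>i<t. is_clique n E (Q i)) \<and>
        (\<forall>i<t. \<forall>j<t. i \<noteq> j \<longrightarrow> Q i \<inter> Q j = {}) \<longrightarrow>
        (\<forall>k. 1 \<le> k \<and> k \<le> t + 1 \<longrightarrow>
           S_k k (A_alpha \<alpha> n E) \<ge> \<alpha> * real k * real r + (1 - \<alpha>) * (real r - real k + 1)))
   \<and>
    (\<forall>(c::nat) (C::nat \<Rightarrow> nat list).
        (\<forall>i<c. induced_cycle n E (C i) \<and> even (length (C i))) \<and>
        (\<forall>i<c. \<forall>j<c. i \<noteq> j \<longrightarrow> set (C i) \<inter> set (C j) = {}) \<and>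
        (\<forall>i<c. \<forall>j<c. i \<le> j \<longrightarrow> length (C j) \<le> length (C i)) \<longrightarrow>
        (\<forall>k. 1 \<le> k \<and> k \<le> c + 1 \<longrightarrow>
           S_k k (A_alpha \<alpha> n E) \<ge>
             (\<alpha> * real k + 1 - \<alpha>) * real r
             + 2 * (1 - \<alpha>) * (\<Sum>i<k - 1. (1 - 4 / real (length (C i))))))"
proof (intro conjI allI impI; elim conjE)
  fix t k :: nat and Q :: "nat \<Rightarrow> nat set"
  assume "\<forall>i<t. is_clique n E (Q i)" "\<forall>i<t. \<forall>j<t. i \<noteq> j \<longrightarrow> Q i \<inter> Q j = {}"
    and "1 \<le> k" "k \<le> t + 1"
  then show "S_k k (A_alpha \<alpha> n E) \<ge> \<alpha> * real k * real r + (1 - \<alpha>) * (real r - real k + 1)"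
    using S_k_A_alpha_disjoint_cliques[OF assms(2,3,1,5), of "k - 1" Q] by (cases k) auto
next
  fix c k :: nat and C :: "nat \<Rightarrow> nat list"
  assume "\<forall>i<c. induced_cycle n E (C i) \<and> even (length (C i))"
    "\<forall>i<c. \<forall>j<c. i \<noteq> j \<longrightarrow> set (C i) \<inter> set (C j) = {}" and "1 \<le> k" "k \<le> c + 1"
  then show "S_k k (A_alpha \<alpha> n E) \<ge> (\<alpha> * real k + 1 - \<alpha>) * real r
      + 2 * (1 - \<alpha>) * (\<Sum>i<k - 1. (1 - 4 / real (length (C i))))"
    using S_k_A_alpha_disjoint_even_cycles[OF assms(2,3,1), of "k - 1" C \<alpha>] by (cases k) auto
qed

end
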